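(* Let $G=(V,E)$ be an infinite graph satisfying the $CDE(n,-K)$ condition for some $n>0$, $K>0$, with $D_\mu<\infty$ and $D_w<\infty$. Let $u$ be a positive solution of the heat equation $\partial_t u=\Delta u$ on $V$. Then for all vertices and all $t>0$, $$\frac{\Gamma(\sqrt{u})}{u}-\frac{\partial_{t}(\sqrt{u})}{\sqrt{u}}\leq \frac{n}{2t}+\sqrt{\tfrac{1}{2}nKD_{\mu}(D_{w}+1)}.$$
   Context: Graphs: $G=(V,E)$ is a connected, locally finite graph; each edge $xy$ carries a weight $w_{xy}>0$ (possibly $w_{xy}\neq w_{yx}$), and $\mu:V\to(0,\infty)$ is a vertex measure. Write $y\sim x$ if $xy\in E$, $\deg(x)=\sum_{y\sim x}w_{xy}<\infty$, $D_\mu=\sup_{x\in V}\deg(x)/\mu(x)$, $D_w=\sup_{x\sim y}\deg(x)/w_{xy}$. The Laplacian is $\Delta f(x)=\frac{1}{\mu(x)}\sum_{y\sim x}w_{xy}(f(y)-f(x))$. The gradient forms are $2\Gamma(f,g)=\Delta(fg)-f\Delta g-g\Delta f$, $2\Gamma_2(f,g)=\Delta\Gamma(f,g)-\Gamma(f,\Delta g)-\Gamma(\Delta f,g)$, $\Gamma(f)=\Gamma(f,f)$, $\Gamma_2(f)=\Gamma_2(f,f)$. The graph satisfies $CDE(n,K)$ ($n>0$, $K\in\mathbb R$) if for every $f:V\to(0,\infty)$ and every vertex, $\widetilde\Gamma_2(f)\ge\frac1n(\Delta f)^2+K\Gamma(f)$, where $\widetilde\Gamma_2(f)=\Gamma_2(f)-\Gamma\big(f,\frac{\Gamma(f)}{f}\big)$.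 A positive solution of the heat equation on a set $U\subset V$ is a function $u:V\times[0,\infty)\to(0,\infty)$, continuously differentiable in $t$, with $\partial_t u(x,t)=\Delta u(\cdot,t)(x)$ for all $x\in U$, $t\ge 0$; here $\sqrt u$, $\Gamma(\sqrt u)$ etc. are taken at each fixed time. *)

theory Defs
  imports "HOL-Analysis.Analysis"
begin

text \<open>Weighted graph on the vertex type 'a (V = UNIV), edge relation E,
  edge weights w (possibly non-symmetric), vertex measure mu.\<close>

definition weighted_graph :: "('a \<Rightarrow> 'a \<Rightarrow> bool) \<Rightarrow> ('a \<Rightarrow> 'a \<Rightarrow> real) \<Rightarrow> ('a \<Rightarrow> real) \<Rightarrow> bool" where
  "weighted_graph E w mu \<longleftrightarrow>
     (\<forall>x y. E x y \<longrightarrow> E y x) \<and> (\<forall>x. \<not> E x x) \<and>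
     (\<forall>x y. E\<^sup>*\<^sup>* x y) \<and>
     (\<forall>x. finite {y. E x y}) \<and>
     (\<forall>x y. E x y \<longrightarrow> w x y > 0) \<and>
     (\<forall>x. mu x > 0)"

definition gdeg :: "('a \<Rightarrow> 'a \<Rightarrow> bool) \<Rightarrow> ('a \<Rightarrow> 'a \<Rightarrow> real) \<Rightarrow> 'a \<Rightarrow> real" where
  "gdeg E w x = (\<Sum>y\<in>{y. E x y}. w x y)"

definition D_mu :: "('a \<Rightarrow> 'a \<Rightarrow> bool) \<Rightarrow> ('a \<Rightarrow> 'a \<Rightarrow> real) \<Rightarrow> ('a \<Rightarrow> real) \<Rightarrow> real" where
  "D_mu E w mu = (SUP x. gdeg E w x / mu x)"

definition D_w :: "('a \<Rightarrow> 'a \<Rightarrow> bool) \<Rightarrow> ('a \<Rightarrow> 'a \<Rightarrow> real) \<Rightarrow> real" where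
  "D_w E w = (SUP p\<in>{(x,y). E x y}. gdeg E w (fst p) / w (fst p) (snd p))"

definition D_mu_finite :: "('a \<Rightarrow> 'a \<Rightarrow> bool) \<Rightarrow> ('a \<Rightarrow> 'a \<Rightarrow> real) \<Rightarrow> ('a \<Rightarrow> real) \<Rightarrow> bool" where
  "D_mu_finite E w mu \<longleftrightarrow> bdd_above (range (\<lambda>x. gdeg E w x / mu x))"

definition D_w_finite :: "('a \<Rightarrow> 'a \<Rightarrow> bool) \<Rightarrow> ('a \<Rightarrow> 'a \<Rightarrow> real) \<Rightarrow> bool" where
  "D_w_finite E w \<longleftrightarrow> bdd_above ((\<lambda>p. gdeg E w (fst p) / w (fst p) (snd p)) ` {(x,y). E x y})"

definition glap :: "('a \<Rightarrow> 'a \<Rightarrow> bool) \<Rightarrow> ('a \<Rightarrow> 'a \<Rightarrow> real) \<Rightarrow> ('a \<Rightarrow> real) \<Rightarrow> ('a \<Rightarrow> real) \<Rightarrow> 'a \<Rightarrow> real" where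
  "glap E w mu f x = (1 / mu x) * (\<Sum>y\<in>{y. E x y}. w x y * (f y - f x))"

definition gGamma :: "('a \<Rightarrow> 'a \<Rightarrow> bool) \<Rightarrow> ('a \<Rightarrow> 'a \<Rightarrow> real) \<Rightarrow> ('a \<Rightarrow> real) \<Rightarrow> ('a \<Rightarrow> real) \<Rightarrow> ('a \<Rightarrow> real) \<Rightarrow> 'a \<Rightarrow> real" where
  "gGamma E w mu f g x =
     (glap E w mu (\<lambda>z. f z * g z) x - f x * glap E w mu g x - g x * glap E w mu f x) / 2"

definition gGamma2 :: "('a \<Rightarrow> 'a \<Rightarrow> bool) \<Rightarrow> ('a \<Rightarrow> 'a \<Rightarrow> real) \<Rightarrow> ('a \<Rightarrow> real) \<Rightarrow> ('a \<Rightarrow> real) \<Rightarrow> ('a \<Rightarrow> real) \<Rightarrow> 'a \<Rightarrow> real" where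
  "gGamma2 E w mu f g x =
     (glap E w mu (gGamma E w mu f g) x - gGamma E w mu f (glap E w mu g) x
        - gGamma E w mu (glap E w mu f) g x) / 2"

definition gGamma2_tilde :: "('a \<Rightarrow> 'a \<Rightarrow> bool) \<Rightarrow> ('a \<Rightarrow> 'a \<Rightarrow> real) \<Rightarrow> ('a \<Rightarrow> real) \<Rightarrow> ('a \<Rightarrow> real) \<Rightarrow> 'a \<Rightarrow> real" where
  "gGamma2_tilde E w mu f x =
     gGamma2 E w mu f f x - gGamma E w mu f (\<lambda>z. gGamma E w mu f f z / f z) x"

definition CDE :: "('a \<Rightarrow> 'a \<Rightarrow> bool) \<Rightarrow> ('a \<Rightarrow> 'a \<Rightarrow> real) \<Rightarrow> ('a \<Rightarrow> real) \<Rightarrow> real \<Rightarrow> real \<Rightarrow> bool" where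
  "CDE E w mu n K \<longleftrightarrow>
     (\<forall>f :: 'a \<Rightarrow> real. (\<forall>z. f z > 0) \<longrightarrow>
        (\<forall>x. gGamma2_tilde E w mu f x \<ge> (1 / n) * (glap E w mu f x)\<^sup>2 + K * gGamma E w mu f f x))"

definition positive_heat_solution :: "('a \<Rightarrow> 'a \<Rightarrow> bool) \<Rightarrow> ('a \<Rightarrow> 'a \<Rightarrow> real) \<Rightarrow> ('a \<Rightarrow> real) \<Rightarrow> ('a \<Rightarrow> real \<Rightarrow> real) \<Rightarrow> bool" where
  "positive_heat_solution E w mu u \<longleftrightarrow>
     (\<forall>x t. t \<ge> 0 \<longrightarrow> u x t > 0) \<and>
     (\<forall>x t. t \<ge> 0 \<longrightarrow>
        ((\<lambda>s. u x s) has_real_derivative glap E w mu (\<lambda>y. u y t) x) (at t within {0..})) \<and>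
     (\<forall>x. continuous_on {0..} (\<lambda>t. glap E w mu (\<lambda>y. u y t) x))"

end

theory Submission
  imports Defs
begin

text \<open>Write \<open>f = \<surd>u\<close>. Since \<open>\<Delta>(f\<^sup>2) = 2 f \<Delta>f + 2 \<Gamma>(f)\<close>, the heat equation gives
  \<open>\<partial>\<^sub>t f = \<Delta>f + \<Gamma>(f)/f\<close>, so the left-hand side is just \<open>-\<Delta>f/f\<close>. Li and Yau's maximum
  principle is run on \<open>H = -s \<Delta>f/f\<close> over \<open>V \<times> [0,t]\<close>; since the graph is infinite, \<open>H\<close> is
  penalised by \<open>\<epsilon>\<close> times the graph distance to the base vertex, which makes the supremum
  attained on a finite ball. At the maximum, \<open>\<partial>\<^sub>s H \<ge> 0\<close> and the neighbouring values of \<open>H\<close>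
  exceed the maximum by at most \<open>\<epsilon>\<close>; feeding this into \<open>CDE(n,-K)\<close> yields
  \<open>2H\<^sup>2/n \<le> H + 2s\<^sup>2K \<Gamma>(f)/f\<^sup>2 + O(\<epsilon>)\<close>. As \<open>\<Delta>f \<le> 0\<close> there, \<open>\<Gamma>(f)/f\<^sup>2 \<le> D\<^sub>\<mu>(D\<^sub>w+1)/2\<close>;
  solving the quadratic inequality and letting \<open>\<epsilon> \<rightarrow> 0\<close> gives the bound.\<close>

section \<open>Calculus of the graph Laplacian\<close>

lemma glap_add: "glap E w mu (\<lambda>z. f z + g z) x = glap E w mu f x + glap E w mu g x"
proof -
  have "(\<Sum>y\<in>{y. E x y}. w x y * (f y + g y - (f x + g x)))
      = (\<Sum>y\<in>{y. E x y}. w x y * (f y - f x)) + (\<Sum>y\<in>{y. E x y}. w x y * (g y - g x))"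
    by (simp add: sum.distrib[symmetric] algebra_simps)
  thus ?thesis unfolding glap_def by (simp add: algebra_simps)
qed

lemma glap_mult_self:
  "glap E w mu (\<lambda>z. f z * f z) x = 2 * f x * glap E w mu f x + 2 * gGamma E w mu f f x"
  unfolding gGamma_def by (simp add: field_simps)

lemma gGamma_self_eq:
  "gGamma E w mu f f x = (1 / (2 * mu x)) * (\<Sum>y\<in>{y. E x y}. w x y * (f y - f x)\<^sup>2)"
proof -
  have "(\<Sum>y\<in>{y. E x y}. w x y * (f y * f y - f x * f x))
        - 2 * f x * (\<Sum>y\<in>{y. E x y}. w x y * (f y - f x))
      = (\<Sum>y\<in>{y. E x y}. w x y * (f y - f x)\<^sup>2)"
    by (simp add: sum_distrib_left sum_subtractf[symmetric] power2_eq_square algebra_simps)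
  moreover have "gGamma E w mu f f x
      = ((1 / mu x) * (\<Sum>y\<in>{y. E x y}. w x y * (f y * f y - f x * f x))
         - 2 * f x * ((1 / mu x) * (\<Sum>y\<in>{y. E x y}. w x y * (f y - f x)))) / 2"
    unfolding gGamma_def glap_def by simp
  ultimately show ?thesis
    by (simp add: diff_divide_distrib[symmetric] right_diff_distrib[symmetric])
qed

lemma gGamma_self_nonneg:
  assumes "mu x > 0" and "\<And>y. E x y \<Longrightarrow> w x y > 0"
  shows "gGamma E w mu f f x \<ge> 0"
  unfolding gGamma_self_eq using assms
  by (intro mult_nonneg_nonneg sum_nonneg) (auto simp: less_imp_le)

lemma glap_has_real_derivative:
  assumes "\<And>y. ((\<lambda>s. F y s) has_real_derivative F' y) (at t within S)"
  shows "((\<lambda>s. glap E w mu (\<lambda>y. F y s) x) has_real_derivative glap E w mu F' x) (at t within S)"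
  unfolding glap_def by (intro DERIV_cmult DERIV_sum DERIV_diff assms)

text \<open>\<open>sqrt_heat_rate f = \<Delta>(f\<^sup>2) / (2f)\<close> is the time derivative of \<open>\<surd>u\<close> along the heat flow.\<close>

definition sqrt_heat_rate ::
    "('a \<Rightarrow> 'a \<Rightarrow> bool) \<Rightarrow> ('a \<Rightarrow> 'a \<Rightarrow> real) \<Rightarrow> ('a \<Rightarrow> real) \<Rightarrow> ('a \<Rightarrow> real) \<Rightarrow> 'a \<Rightarrow> real" where
  "sqrt_heat_rate E w mu f x = glap E w mu f x + gGamma E w mu f f x / f x"

lemma gGamma2_tilde_eq:
  assumes "\<And>z. f z \<noteq> 0"
  shows "2 * gGamma2_tilde E w mu f x
      = f x * glap E w mu (sqrt_heat_rate E w mu f) x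
        - glap E w mu (\<lambda>z. f z * glap E w mu f z) x
        + glap E w mu f x * sqrt_heat_rate E w mu f x"
proof -
  define L where "L = glap E w mu f"
  define G where "G = (\<lambda>z. gGamma E w mu f f z)"
  define R where "R = (\<lambda>z. G z / f z)"
  define P where "P = glap E w mu (\<lambda>z. f z * L z) x"
  have fR: "(\<lambda>z. f z * R z) = G" using assms by (auto simp: R_def)
  have "(\<lambda>z. L z * f z) = (\<lambda>z. f z * L z)" by (auto simp: mult.commute)
  then have "gGamma E w mu f L x = (P - f x * glap E w mu L x - L x * L x) / 2"
    and "gGamma E w mu L f x = (P - L x * L x - f x * glap E w mu L x) / 2"
    and "gGamma E w mu f R x = (glap E w mu G x - f x * glap E w mu R x - R x * L x) / 2"
    unfolding gGamma_def P_def using fR by (simp_all add: L_def)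
  moreover have "gGamma2_tilde E w mu f x
      = (glap E w mu G x - gGamma E w mu f L x - gGamma E w mu L f x) / 2 - gGamma E w mu f R x"
    unfolding gGamma2_tilde_def gGamma2_def R_def G_def L_def by simp
  moreover have "sqrt_heat_rate E w mu f = (\<lambda>z. L z + R z)"
    by (auto simp: sqrt_heat_rate_def L_def R_def G_def)
  then have "glap E w mu (sqrt_heat_rate E w mu f) x = glap E w mu L x + glap E w mu R x"
    and "sqrt_heat_rate E w mu f x = L x + R x"
    by (simp_all add: glap_add)
  ultimately show ?thesis
    unfolding P_def L_def[symmetric] by (simp add: algebra_simps R_def)
qed

section \<open>Pointwise estimates\<close>

lemma glap_mult_glap_lower_bound:
  assumes fpos: "\<And>z. f z > 0" and mupos: "mu x > 0" and wpos: "\<And>y. E x y \<Longrightarrow> w x y > 0"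
    and near_max: "\<And>y. E x y \<Longrightarrow> - glap E w mu f y / f y \<le> - glap E w mu f x / f x + \<delta>"
  shows "glap E w mu (\<lambda>z. f z * glap E w mu f z) x
    \<ge> glap E w mu f x / f x * glap E w mu (\<lambda>z. f z * f z) x
      - \<delta> * ((1 / mu x) * (\<Sum>y\<in>{y. E x y}. w x y * (f y)\<^sup>2))"
proof -
  define L where "L = glap E w mu f"
  define c where "c = L x / f x"
  have term_le: "w x y * (c * (f y * f y - f x * f x) - \<delta> * (f y)\<^sup>2) \<le> w x y * (f y * L y - f x * L x)"
    if "E x y" for y
  proof -
    have "c - \<delta> \<le> L y / f y" using near_max[OF that] by (simp add: L_def c_def)
    hence "f y * (c - \<delta>) \<le> L y" using fpos[of y] by (simp add: pos_le_divide_eq mult.commute)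
    hence "f y * (f y * (c - \<delta>)) \<le> f y * L y" using fpos[of y] by (simp add: mult_left_mono)
    moreover have "f x * L x = c * (f x * f x)" using fpos[of x] by (simp add: c_def)
    ultimately show ?thesis
      using wpos[OF that] by (intro mult_left_mono) (auto simp: algebra_simps power2_eq_square)
  qed
  have "(1 / mu x) * (\<Sum>y\<in>{y. E x y}. w x y * (c * (f y * f y - f x * f x) - \<delta> * (f y)\<^sup>2))
      \<le> (1 / mu x) * (\<Sum>y\<in>{y. E x y}. w x y * (f y * L y - f x * L x))"
    using mupos term_le by (intro mult_left_mono[OF sum_mono]) auto
  thus ?thesis
    unfolding glap_def L_def[symmetric] c_def[symmetric]
    by (simp add: algebra_simps sum_distrib_left sum_subtractf sum.distrib)
qed

lemma CDE_lower_bound_near_max: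
  assumes fpos: "\<And>z. f z > 0" and mupos: "mu x > 0" and wpos: "\<And>y. E x y \<Longrightarrow> w x y > 0"
    and cde: "gGamma2_tilde E w mu f x \<ge> (1 / n) * (glap E w mu f x)\<^sup>2 + (- K) * gGamma E w mu f f x"
    and near_max: "\<And>y. E x y \<Longrightarrow> - glap E w mu f y / f y \<le> - glap E w mu f x / f x + \<delta>"
  shows "f x * glap E w mu (sqrt_heat_rate E w mu f) x - glap E w mu f x * sqrt_heat_rate E w mu f x
    \<ge> 2 * (glap E w mu f x)\<^sup>2 / n - 2 * K * gGamma E w mu f f x
      - \<delta> * ((1 / mu x) * (\<Sum>y\<in>{y. E x y}. w x y * (f y)\<^sup>2))"
proof -
  have "f z \<noteq> 0" for z using fpos[of z] by simp
  note identity = gGamma2_tilde_eq[of f E w mu x, OF this]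
  have "glap E w mu f x / f x * glap E w mu (\<lambda>z. f z * f z) x
      = 2 * glap E w mu f x * sqrt_heat_rate E w mu f x"
    using fpos[of x] unfolding glap_mult_self sqrt_heat_rate_def by (simp add: field_simps)
  with glap_mult_glap_lower_bound[OF fpos mupos wpos near_max] identity cde show ?thesis
    by (simp add: algebra_simps)
qed

lemma neg_glap_div_le_gdeg_div:
  assumes fpos: "\<And>z. f z > 0" and mupos: "mu x > 0" and wpos: "\<And>y. E x y \<Longrightarrow> w x y > 0"
  shows "- glap E w mu f x / f x \<le> gdeg E w x / mu x"
proof -
  have "(\<Sum>y\<in>{y. E x y}. w x y * (f x - f y)) \<le> (\<Sum>y\<in>{y. E x y}. w x y * f x)"
    using fpos wpos by (intro sum_mono mult_left_mono) (auto simp: less_imp_le)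
  moreover have "- (\<Sum>y\<in>{y. E x y}. w x y * (f y - f x)) = (\<Sum>y\<in>{y. E x y}. w x y * (f x - f y))"
    by (simp add: sum_negf[symmetric] algebra_simps)
  ultimately have "- (\<Sum>y\<in>{y. E x y}. w x y * (f y - f x)) \<le> gdeg E w x * f x"
    unfolding gdeg_def by (simp add: sum_distrib_right)
  thus ?thesis
    using fpos[of x] mupos unfolding glap_def by (simp add: field_simps)
qed

lemma glap_nonpos_increment_sums:
  assumes fpos: "\<And>z. f z > 0" and mupos: "mu x > 0" and wpos: "\<And>y. E x y \<Longrightarrow> w x y > 0"
    and lap: "glap E w mu f x \<le> 0"
  shows "(\<Sum>y\<in>{y. E x y}. w x y * max (f y - f x) 0) \<le> (\<Sum>y\<in>{y. E x y}. w x y * max (f x - f y) 0)"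
    and "(\<Sum>y\<in>{y. E x y}. w x y * max (f x - f y) 0) \<le> gdeg E w x * f x"
proof -
  have "(\<Sum>y\<in>{y. E x y}. w x y * (f y - f x)) \<le> 0"
    using lap mupos by (auto simp: glap_def divide_le_0_iff)
  moreover have "(\<Sum>y\<in>{y. E x y}. w x y * (f y - f x))
      = (\<Sum>y\<in>{y. E x y}. w x y * max (f y - f x) 0) - (\<Sum>y\<in>{y. E x y}. w x y * max (f x - f y) 0)"
    unfolding sum_subtractf[symmetric] by (rule sum.cong) (auto simp: max_def algebra_simps)
  ultimately show "(\<Sum>y\<in>{y. E x y}. w x y * max (f y - f x) 0) \<le> (\<Sum>y\<in>{y. E x y}. w x y * max (f x - f y) 0)"
    by linarith
  have "(\<Sum>y\<in>{y. E x y}. w x y * max (f x - f y) 0) \<le> (\<Sum>y\<in>{y. E x y}. w x y * f x)"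
    using fpos wpos by (intro sum_mono mult_left_mono) (auto simp: less_imp_le)
  thus "(\<Sum>y\<in>{y. E x y}. w x y * max (f x - f y) 0) \<le> gdeg E w x * f x"
    unfolding gdeg_def by (simp add: sum_distrib_right)
qed

lemma glap_nonpos_increment_le:
  assumes fpos: "\<And>z. f z > 0" and mupos: "mu x > 0" and wpos: "\<And>y. E x y \<Longrightarrow> w x y > 0"
    and fin: "finite {y. E x y}" and lap: "glap E w mu f x \<le> 0" and "E x y"
  shows "f y - f x \<le> gdeg E w x / w x y * f x"
proof -
  have "w x y * max (f y - f x) 0 \<le> (\<Sum>z\<in>{z. E x z}. w x z * max (f z - f x) 0)"
    using fin \<open>E x y\<close> wpos by (intro member_le_sum) (auto simp: less_imp_le)
  also have "\<dots> \<le> gdeg E w x * f x"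
    using glap_nonpos_increment_sums[OF fpos mupos wpos lap] by linarith
  finally have "w x y * (f y - f x) \<le> gdeg E w x * f x"
    using mult_left_mono[OF max.cobounded1 less_imp_le[OF wpos[OF \<open>E x y\<close>]], of "f y - f x" 0]
    by linarith
  thus ?thesis using wpos[OF \<open>E x y\<close>] by (simp add: field_simps)
qed

lemma gGamma_div_square_le:
  assumes fpos: "\<And>z. f z > 0" and mupos: "mu x > 0" and wpos: "\<And>y. E x y \<Longrightarrow> w x y > 0"
    and fin: "finite {y. E x y}" and lap: "glap E w mu f x \<le> 0"
    and Dw: "\<And>y. E x y \<Longrightarrow> gdeg E w x / w x y \<le> Dw" and Dw0: "Dw \<ge> 0"
  shows "gGamma E w mu f f x / (f x)\<^sup>2 \<le> (Dw + 1) / 2 * (gdeg E w x / mu x)"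
proof -
  define P where "P = (\<Sum>y\<in>{y. E x y}. w x y * max (f y - f x) 0)"
  define M where "M = (\<Sum>y\<in>{y. E x y}. w x y * max (f x - f y) 0)"
  have PM: "P \<le> M" and M: "M \<le> gdeg E w x * f x"
    using glap_nonpos_increment_sums[OF fpos mupos wpos lap] by (simp_all add: P_def M_def)
  have sq_le: "w x y * (f y - f x)\<^sup>2 \<le> f x * (Dw * (w x y * max (f y - f x) 0) + w x y * max (f x - f y) 0)"
    if "E x y" for y
  proof -
    have "gdeg E w x / w x y * f x \<le> Dw * f x"
      using Dw[OF that] fpos[of x] by (intro mult_right_mono) auto
    hence up: "f y - f x \<le> Dw * f x"
      using glap_nonpos_increment_le[OF fpos mupos wpos fin lap that] by linarith
    have "(f y - f x)\<^sup>2 \<le> f x * (Dw * max (f y - f x) 0 + max (f x - f y) 0)"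
    proof (cases "f y \<ge> f x")
      case True
      then show ?thesis using up mult_right_mono[OF up, of "f y - f x"]
        by (simp add: power2_eq_square algebra_simps max_def)
    next
      case False
      then show ?thesis using fpos[of y] mult_right_mono[of "f x - f y" "f x" "f x - f y"]
        by (simp add: power2_eq_square algebra_simps max_def)
    qed
    hence "w x y * (f y - f x)\<^sup>2 \<le> w x y * (f x * (Dw * max (f y - f x) 0 + max (f x - f y) 0))"
      using wpos[OF that] by (intro mult_left_mono) auto
    thus ?thesis by (simp add: algebra_simps)
  qed
  have "(\<Sum>y\<in>{y. E x y}. w x y * (f y - f x)\<^sup>2)
      \<le> (\<Sum>y\<in>{y. E x y}. f x * (Dw * (w x y * max (f y - f x) 0) + w x y * max (f x - f y) 0))"
    by (rule sum_mono) (use sq_le in auto)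
  also have "\<dots> = f x * (Dw * P + M)"
    unfolding P_def M_def by (simp add: sum_distrib_left sum.distrib distrib_left)
  also have "\<dots> \<le> f x * ((Dw + 1) * M)"
    using mult_left_mono[OF PM Dw0] fpos[of x] by (intro mult_left_mono) (auto simp: algebra_simps)
  also have "\<dots> \<le> f x * ((Dw + 1) * (gdeg E w x * f x))"
    using M Dw0 fpos[of x] by (intro mult_left_mono) auto
  finally have "(\<Sum>y\<in>{y. E x y}. w x y * (f y - f x)\<^sup>2) \<le> (Dw + 1) * gdeg E w x * (f x)\<^sup>2"
    by (simp add: power2_eq_square mult_ac)
  thus ?thesis
    unfolding gGamma_self_eq using mupos fpos[of x] by (simp add: field_simps)
qed

lemma neighbour_square_mean_le:
  assumes fpos: "\<And>z. f z > 0" and mupos: "mu x > 0" and wpos: "\<And>y. E x y \<Longrightarrow> w x y > 0"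
    and fin: "finite {y. E x y}" and lap: "glap E w mu f x \<le> 0"
    and Dw: "\<And>y. E x y \<Longrightarrow> gdeg E w x / w x y \<le> Dw" and Dw0: "Dw \<ge> 0"
  shows "(1 / mu x) * (\<Sum>y\<in>{y. E x y}. w x y * (f y)\<^sup>2) / (f x)\<^sup>2 \<le> (1 + Dw)\<^sup>2 * (gdeg E w x / mu x)"
proof -
  have sq_le: "(f y)\<^sup>2 \<le> (1 + Dw)\<^sup>2 * (f x)\<^sup>2" if "E x y" for y
  proof -
    have "gdeg E w x / w x y * f x \<le> Dw * f x"
      using Dw[OF that] fpos[of x] by (intro mult_right_mono) auto
    hence "f y \<le> (1 + Dw) * f x"
      using glap_nonpos_increment_le[OF fpos mupos wpos fin lap that] by (simp add: algebra_simps)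
    hence "(f y)\<^sup>2 \<le> ((1 + Dw) * f x)\<^sup>2" using fpos[of y] by (intro power_mono) auto
    thus ?thesis by (simp add: power_mult_distrib)
  qed
  have "(\<Sum>y\<in>{y. E x y}. w x y * (f y)\<^sup>2) \<le> (\<Sum>y\<in>{y. E x y}. w x y * ((1 + Dw)\<^sup>2 * (f x)\<^sup>2))"
    by (rule sum_mono) (use sq_le wpos in \<open>auto intro!: mult_left_mono less_imp_le\<close>)
  also have "\<dots> = (1 + Dw)\<^sup>2 * (f x)\<^sup>2 * gdeg E w x"
    unfolding gdeg_def by (simp add: sum_distrib_right mult.commute)
  finally have "(1 / mu x) * (\<Sum>y\<in>{y. E x y}. w x y * (f y)\<^sup>2) \<le> (1 / mu x) * ((1 + Dw)\<^sup>2 * (f x)\<^sup>2 * gdeg E w x)"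
    using mupos by (intro mult_left_mono) auto
  thus ?thesis using mupos fpos[of x] by (simp add: divide_le_eq mult.commute mult.left_commute)
qed

lemma quadratic_le_bound:
  fixes h n c :: real
  assumes n: "n > 0" and c: "c \<ge> 0" and h: "2 * h\<^sup>2 / n \<le> h + c"
  shows "h \<le> n / 2 + sqrt (n * c / 2)"
proof (cases "h \<le> n / 2")
  case False
  define r where "r = h - n / 2"
  have "r > 0" using False by (simp add: r_def)
  have "2 * h\<^sup>2 / n - h = r + 2 * r\<^sup>2 / n"
    using n by (simp add: r_def field_simps power2_eq_square)
  hence "2 * r\<^sup>2 / n \<le> c" using h \<open>r > 0\<close> by linarith
  hence "r\<^sup>2 \<le> n * c / 2" using n by (simp add: field_simps)
  hence "r \<le> sqrt (n * c / 2)" by (rule real_le_rsqrt)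
  thus ?thesis by (simp add: r_def)
next
  case True
  moreover have "0 \<le> sqrt (n * c / 2)" using n c by simp
  ultimately show ?thesis by linarith
qed

lemma harnack_quadratic_inequality_at_max:
  fixes E :: "'a \<Rightarrow> 'a \<Rightarrow> bool" and w :: "'a \<Rightarrow> 'a \<Rightarrow> real" and mu f :: "'a \<Rightarrow> real"
    and x :: 'a and s n K \<epsilon> :: real
  defines "h \<equiv> - s * glap E w mu f x / f x"
  assumes fpos: "\<And>z. f z > 0" and mupos: "mu x > 0" and wpos: "\<And>y. E x y \<Longrightarrow> w x y > 0"
    and cde: "gGamma2_tilde E w mu f x \<ge> (1 / n) * (glap E w mu f x)\<^sup>2 + (- K) * gGamma E w mu f f x"
    and "s > 0"
    and near_max: "\<And>y. E x y \<Longrightarrow> - s * glap E w mu f y / f y \<le> h + \<epsilon>"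
    and time: "0 \<le> - glap E w mu f x / f x
      - s * (f x * glap E w mu (sqrt_heat_rate E w mu f) x
             - glap E w mu f x * sqrt_heat_rate E w mu f x) / (f x)\<^sup>2"
  shows "2 * h\<^sup>2 / n \<le> h + 2 * s\<^sup>2 * K * (gGamma E w mu f f x / (f x)\<^sup>2)
           + s * \<epsilon> * ((1 / mu x) * (\<Sum>y\<in>{y. E x y}. w x y * (f y)\<^sup>2) / (f x)\<^sup>2)"
proof -
  define L where "L = glap E w mu f x"
  define S where "S = (1 / mu x) * (\<Sum>y\<in>{y. E x y}. w x y * (f y)\<^sup>2)"
  have fx: "f x > 0" using fpos by simp
  have "- glap E w mu f y / f y \<le> - glap E w mu f x / f x + \<epsilon> / s" if "E x y" for y
    using near_max[OF that] \<open>s > 0\<close> by (simp add: h_def field_simps)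
  from CDE_lower_bound_near_max[OF fpos mupos wpos cde this]
  have "s * (2 * L\<^sup>2 / n - 2 * K * gGamma E w mu f f x - \<epsilon> / s * S) / (f x)\<^sup>2
      \<le> s * (f x * glap E w mu (sqrt_heat_rate E w mu f) x
             - glap E w mu f x * sqrt_heat_rate E w mu f x) / (f x)\<^sup>2"
    using \<open>s > 0\<close> unfolding L_def S_def by (intro divide_right_mono mult_left_mono) auto
  with time have "0 \<le> - L / f x - s * (2 * L\<^sup>2 / n - 2 * K * gGamma E w mu f f x - \<epsilon> / s * S) / (f x)\<^sup>2"
    unfolding L_def by linarith
  hence "0 \<le> s * (- L / f x - s * (2 * L\<^sup>2 / n - 2 * K * gGamma E w mu f f x - \<epsilon> / s * S) / (f x)\<^sup>2)"
    using \<open>s > 0\<close> by simp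
  also have "\<dots> = h - 2 * h\<^sup>2 / n + 2 * s\<^sup>2 * K * (gGamma E w mu f f x / (f x)\<^sup>2)
           + s * \<epsilon> * (S / (f x)\<^sup>2)"
    using \<open>s > 0\<close> fx unfolding h_def L_def by (simp add: field_simps power2_eq_square)
  finally show ?thesis unfolding S_def by linarith
qed

section \<open>The maximum principle on an infinite graph\<close>

text \<open>On vertices not reachable from \<open>v0\<close>, \<open>gdist\<close> is the junk value \<open>LEAST k. False = 0\<close>,
  so the lemmas below assume connectedness.\<close>

definition gdist :: "('a \<Rightarrow> 'a \<Rightarrow> bool) \<Rightarrow> 'a \<Rightarrow> 'a \<Rightarrow> nat" where
  "gdist E v0 x = (LEAST k. (E ^^ k) v0 x)"

lemma gdist_relpowp: "E\<^sup>*\<^sup>* v0 x \<Longrightarrow> (E ^^ gdist E v0 x) v0 x"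
  unfolding gdist_def by (metis rtranclp_imp_relpowp LeastI)

lemma gdist_self [simp]: "gdist E v0 v0 = 0"
  unfolding gdist_def by (rule Least_eq_0) simp

lemma gdist_step:
  assumes "E\<^sup>*\<^sup>* v0 x" and "E x y"
  shows "gdist E v0 y \<le> gdist E v0 x + 1"
proof -
  have "(E ^^ Suc (gdist E v0 x)) v0 y"
    using relpowp_Suc_I[OF gdist_relpowp[OF assms(1)] assms(2)] .
  hence "gdist E v0 y \<le> Suc (gdist E v0 x)" unfolding gdist_def by (rule Least_le)
  thus ?thesis by simp
qed

lemma finite_relpowp_image:
  fixes E :: "'a \<Rightarrow> 'a \<Rightarrow> bool" and v0 :: 'a
  assumes "\<And>x. finite {y. E x y}"
  shows "finite {x. (E ^^ k) v0 x}"
proof (induction k)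
  case 0
  have "{x. (E ^^ 0) v0 x} \<subseteq> {v0}" by auto
  then show ?case using finite_subset by blast
next
  case (Suc k)
  have "{x. (E ^^ Suc k) v0 x} \<subseteq> (\<Union>y\<in>{x. (E ^^ k) v0 x}. {z. E y z})" by auto
  moreover have "finite (\<Union>y\<in>{x. (E ^^ k) v0 x}. {z. E y z})" using Suc assms by auto
  ultimately show ?case by (rule finite_subset)
qed

lemma gdist_sublevel_finite:
  assumes conn: "\<And>x. E\<^sup>*\<^sup>* v0 x" and fin: "\<And>x. finite {y. E x y}"
  shows "finite {x. real (gdist E v0 x) \<le> R}"
proof -
  have "{x. real (gdist E v0 x) \<le> R} \<subseteq> (\<Union>k\<in>{..nat \<lceil>R\<rceil>}. {x. (E ^^ k) v0 x})"
  proof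
    fix x assume "x \<in> {x. real (gdist E v0 x) \<le> R}"
    hence "gdist E v0 x \<in> {..nat \<lceil>R\<rceil>}" by (simp add: le_nat_iff le_ceiling_iff)
    with gdist_relpowp[OF conn] show "x \<in> (\<Union>k\<in>{..nat \<lceil>R\<rceil>}. {x. (E ^^ k) v0 x})" by blast
  qed
  moreover have "finite (\<Union>k\<in>{..nat \<lceil>R\<rceil>}. {x. (E ^^ k) v0 x})"
    using finite_relpowp_image[of E, OF fin] by blast
  ultimately show ?thesis by (rule finite_subset)
qed

lemma penalized_sup_attained:
  fixes H :: "'a \<Rightarrow> real \<Rightarrow> real" and \<psi> :: "'a \<Rightarrow> real"
  assumes "t \<ge> 0" and "\<epsilon> > 0"
    and cont: "\<And>z. continuous_on {0..t} (H z)"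
    and bdd: "\<And>z s. s \<in> {0..t} \<Longrightarrow> H z s \<le> C"
    and fin: "\<And>R. finite {z. \<psi> z \<le> R}"
  obtains ts xs where "ts \<in> {0..t}"
    and "\<And>z r. r \<in> {0..t} \<Longrightarrow> H z r - \<epsilon> * \<psi> z \<le> H xs ts - \<epsilon> * \<psi> xs"
proof -
  define \<Phi> where "\<Phi> z s = H z s - \<epsilon> * \<psi> z" for z s
  define x0 :: 'a where "x0 = undefined"
  \<comment> \<open>Off this finite set the penalty pushes \<open>\<Phi>\<close> below its value at \<open>(x0, 0)\<close>.\<close>
  define Bl where "Bl = {z. \<psi> z \<le> (C - \<Phi> x0 0) / \<epsilon>}"
  have x0: "x0 \<in> Bl"
    using bdd[of 0 x0] \<open>t \<ge> 0\<close> \<open>\<epsilon> > 0\<close> by (simp add: Bl_def \<Phi>_def pos_le_divide_eq mult.commute)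
  have outside: "\<Phi> z r < \<Phi> x0 0" if "z \<notin> Bl" "r \<in> {0..t}" for z r
    using that bdd[OF that(2), of z] \<open>\<epsilon> > 0\<close>
    by (simp add: Bl_def \<Phi>_def not_le pos_divide_less_eq mult.commute)
  have "\<forall>z\<in>Bl. \<exists>s. s \<in> {0..t} \<and> (\<forall>r\<in>{0..t}. \<Phi> z r \<le> \<Phi> z s)"
  proof
    fix z
    have "continuous_on {0..t} (\<lambda>r. \<Phi> z r)"
      unfolding \<Phi>_def by (intro continuous_on_diff cont continuous_on_const)
    with \<open>t \<ge> 0\<close> show "\<exists>s. s \<in> {0..t} \<and> (\<forall>r\<in>{0..t}. \<Phi> z r \<le> \<Phi> z s)"
      using continuous_attains_sup[OF compact_Icc] by fastforce
  qed
  then obtain sm where sm: "\<And>z. z \<in> Bl \<Longrightarrow> sm z \<in> {0..t} \<and> (\<forall>r\<in>{0..t}. \<Phi> z r \<le> \<Phi> z (sm z))"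
    by metis
  have "finite Bl" unfolding Bl_def by (rule fin)
  define M where "M = Max ((\<lambda>z. \<Phi> z (sm z)) ` Bl)"
  have "M \<in> (\<lambda>z. \<Phi> z (sm z)) ` Bl" unfolding M_def using \<open>finite Bl\<close> x0 by (intro Max_in) auto
  then obtain xs where xs: "xs \<in> Bl" "M = \<Phi> xs (sm xs)" by auto
  have le_M: "\<Phi> z (sm z) \<le> M" if "z \<in> Bl" for z
    unfolding M_def using \<open>finite Bl\<close> that by (intro Max_ge) auto
  have "\<Phi> z r \<le> \<Phi> xs (sm xs)" if "r \<in> {0..t}" for z r
  proof (cases "z \<in> Bl")
    case True
    then show ?thesis using sm[OF True] le_M[OF True] that xs(2) by force
  next
    case False
    have "\<Phi> x0 0 \<le> M" using sm[OF x0] le_M[OF x0] \<open>t \<ge> 0\<close> by force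
    then show ?thesis using outside[OF False that] xs(2) by linarith
  qed
  with sm[OF xs(1)] show ?thesis using that unfolding \<Phi>_def by blast
qed

lemma has_real_derivative_nonneg_at_left_max:
  assumes deriv: "(h has_real_derivative D) (at s within {0..})" and "s > 0"
    and max: "\<And>r. r \<in> {0..s} \<Longrightarrow> h r \<le> h s"
  shows "D \<ge> 0"
proof (rule ccontr)
  assume "\<not> D \<ge> 0"
  then obtain d where "d > 0" and dec: "\<And>k. k > 0 \<Longrightarrow> s - k \<in> {0..} \<Longrightarrow> k < d \<Longrightarrow> h s < h (s - k)"
    using has_real_derivative_neg_dec_left[OF deriv] by force
  define k where "k = min (d / 2) s"
  have "h s < h (s - k)" using \<open>d > 0\<close> \<open>s > 0\<close> by (intro dec) (auto simp: k_def)
  moreover have "h (s - k) \<le> h s" using \<open>d > 0\<close> \<open>s > 0\<close> by (intro max) (auto simp: k_def)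
  ultimately show False by simp
qed

section \<open>Positive solutions of the heat equation\<close>

lemma sqrt_heat_has_derivative:
  assumes heat: "positive_heat_solution E w mu u" and "s \<ge> 0"
  shows "((\<lambda>r. sqrt (u y r)) has_real_derivative sqrt_heat_rate E w mu (\<lambda>z. sqrt (u z s)) y)
           (at s within {0..})"
proof -
  define f where "f = (\<lambda>z. sqrt (u z s))"
  have upos: "u z s > 0" for z using heat \<open>s \<ge> 0\<close> by (simp add: positive_heat_solution_def)
  have deriv: "((\<lambda>r. sqrt (u y r)) has_real_derivative inverse (sqrt (u y s)) / 2 * glap E w mu (\<lambda>z. u z s) y)
          (at s within {0..})"
    using heat \<open>s \<ge> 0\<close> unfolding positive_heat_solution_def
    by (intro DERIV_chain2[where g = "u y", OF DERIV_real_sqrt[OF upos[of y]]]) blast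
  have "glap E w mu (\<lambda>z. u z s) y = glap E w mu (\<lambda>z. f z * f z) y"
    using upos by (simp add: f_def less_imp_le)
  moreover have "sqrt (u y s) = f y" and "f y > 0" using upos by (simp_all add: f_def)
  ultimately have "inverse (sqrt (u y s)) / 2 * glap E w mu (\<lambda>z. u z s) y = sqrt_heat_rate E w mu f y"
    unfolding glap_mult_self sqrt_heat_rate_def by (simp add: field_simps)
  with deriv show ?thesis unfolding f_def by simp
qed

lemma heat_lhs_eq:
  assumes heat: "positive_heat_solution E w mu u" and "t > 0"
  shows "gGamma E w mu (\<lambda>y. sqrt (u y t)) (\<lambda>y. sqrt (u y t)) x / u x t
           - deriv (\<lambda>s. sqrt (u x s)) t / sqrt (u x t)
         = - glap E w mu (\<lambda>y. sqrt (u y t)) x / sqrt (u x t)"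
proof -
  have "((\<lambda>s. sqrt (u x s)) has_real_derivative sqrt_heat_rate E w mu (\<lambda>z. sqrt (u z t)) x) (at t)"
    using sqrt_heat_has_derivative[OF heat, of t x] \<open>t > 0\<close>
    by (simp add: at_within_interior[of t "{0..}"])
  hence "deriv (\<lambda>s. sqrt (u x s)) t = sqrt_heat_rate E w mu (\<lambda>z. sqrt (u z t)) x"
    by (rule DERIV_imp_deriv)
  moreover have "u x t > 0" using heat \<open>t > 0\<close> by (simp add: positive_heat_solution_def)
  ultimately show ?thesis
    unfolding sqrt_heat_rate_def by (simp add: field_simps power2_eq_square[symmetric])
qed

text \<open>By \<open>heat_lhs_eq\<close>, \<open>s\<close> times the left-hand side of the Li--Yau inequality at time \<open>s\<close>.\<close>

definition harnack_quantity ::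
    "('a \<Rightarrow> 'a \<Rightarrow> bool) \<Rightarrow> ('a \<Rightarrow> 'a \<Rightarrow> real) \<Rightarrow> ('a \<Rightarrow> real) \<Rightarrow> ('a \<Rightarrow> real \<Rightarrow> real) \<Rightarrow> 'a \<Rightarrow> real \<Rightarrow> real"
  where "harnack_quantity E w mu u x s = - s * glap E w mu (\<lambda>y. sqrt (u y s)) x / sqrt (u x s)"

lemma harnack_quantity_has_derivative:
  assumes heat: "positive_heat_solution E w mu u" and "s \<ge> 0"
  defines "f \<equiv> \<lambda>y. sqrt (u y s)"
  shows "((\<lambda>r. harnack_quantity E w mu u x r) has_real_derivative
      - glap E w mu f x / f x
      - s * (f x * glap E w mu (sqrt_heat_rate E w mu f) x
             - glap E w mu f x * sqrt_heat_rate E w mu f x) / (f x)\<^sup>2) (at s within {0..})"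
proof -
  define L where "L r = glap E w mu (\<lambda>y. sqrt (u y r)) x" for r
  define F where "F r = sqrt (u x r)" for r
  have "(F has_real_derivative sqrt_heat_rate E w mu f x) (at s within {0..})"
    unfolding F_def f_def by (rule sqrt_heat_has_derivative[OF heat \<open>s \<ge> 0\<close>])
  moreover have "(L has_real_derivative glap E w mu (sqrt_heat_rate E w mu f) x) (at s within {0..})"
    unfolding L_def f_def
    by (rule glap_has_real_derivative[OF sqrt_heat_has_derivative[OF heat \<open>s \<ge> 0\<close>]])
  moreover have "u x s > 0" using heat \<open>s \<ge> 0\<close> by (simp add: positive_heat_solution_def)
  hence "F s \<noteq> 0" by (simp add: F_def)
  ultimately have "((\<lambda>r. - r * L r / F r) has_real_derivative
      - L s / F s - s * (F s * glap E w mu (sqrt_heat_rate E w mu f) x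
             - L s * sqrt_heat_rate E w mu f x) / (F s)\<^sup>2) (at s within {0..})"
    by (auto intro!: derivative_eq_intros simp: field_simps power2_eq_square)
  then show ?thesis
    unfolding harnack_quantity_def L_def F_def f_def .
qed

lemma harnack_quantity_continuous_on:
  assumes "positive_heat_solution E w mu u"
  shows "continuous_on {0..t} (harnack_quantity E w mu u x)"
  unfolding continuous_on_eq_continuous_within
proof
  fix s :: real assume "s \<in> {0..t}"
  with harnack_quantity_has_derivative[OF assms, of s x]
  have "continuous (at s within {0..}) (harnack_quantity E w mu u x)"
    by (auto dest: DERIV_continuous)
  then show "continuous (at s within {0..t}) (harnack_quantity E w mu u x)"
    by (rule continuous_within_subset) auto
qed

lemma harnack_quantity_le_gdeg:
  assumes graph: "weighted_graph E w mu" and heat: "positive_heat_solution E w mu u" and "s \<ge> 0"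
  shows "harnack_quantity E w mu u x s \<le> s * (gdeg E w x / mu x)"
proof -
  have "- glap E w mu (\<lambda>y. sqrt (u y s)) x / sqrt (u x s) \<le> gdeg E w x / mu x"
    using graph heat \<open>s \<ge> 0\<close>
    by (intro neg_glap_div_le_gdeg_div) (auto simp: weighted_graph_def positive_heat_solution_def)
  from mult_left_mono[OF this \<open>s \<ge> 0\<close>] show ?thesis
    unfolding harnack_quantity_def by simp
qed

lemma gdeg_nonneg: "(\<And>y. E x y \<Longrightarrow> w x y > 0) \<Longrightarrow> gdeg E w x \<ge> 0"
  unfolding gdeg_def by (intro sum_nonneg) (auto simp: less_imp_le)

lemma gdeg_div_mu_le_D_mu: "D_mu_finite E w mu \<Longrightarrow> gdeg E w x / mu x \<le> D_mu E w mu"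
  unfolding D_mu_def D_mu_finite_def by (intro cSUP_upper) auto

lemma gdeg_div_w_le_D_w: "D_w_finite E w \<Longrightarrow> E x y \<Longrightarrow> gdeg E w x / w x y \<le> D_w E w"
  unfolding D_w_def D_w_finite_def
  using cSUP_upper[of "(x, y)" "{(x, y). E x y}" "\<lambda>p. gdeg E w (fst p) / w (fst p) (snd p)"] by simp

lemma gdeg_div_mu_bound_nonneg:
  assumes "weighted_graph E w mu" and "\<And>z. gdeg E w z / mu z \<le> Dm"
  shows "Dm \<ge> 0"
proof -
  have "0 \<le> gdeg E w z / mu z" for z
    using assms(1) gdeg_nonneg[of E z w] by (simp add: weighted_graph_def less_imp_le)
  with assms(2) show ?thesis by (meson order_trans)
qed

text \<open>\<open>D_w\<close> is a supremum over the edges, which is junk for an edgeless graph; infinitude and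
  connectedness provide an edge.\<close>

lemma D_w_nonneg:
  fixes E :: "'a \<Rightarrow> 'a \<Rightarrow> bool"
  assumes graph: "weighted_graph E w mu" and "infinite (UNIV :: 'a set)" and "D_w_finite E w"
  shows "D_w E w \<ge> 0"
proof -
  obtain a b :: 'a where "a \<noteq> b" using ex_new_if_finite[OF \<open>infinite UNIV\<close>, of "{a}"] by auto
  moreover have "E\<^sup>*\<^sup>* a b" using graph by (simp add: weighted_graph_def)
  ultimately obtain c where "E a c" by (metis converse_rtranclpE)
  moreover have "\<And>y. E a y \<Longrightarrow> w a y > 0" using graph by (simp add: weighted_graph_def)
  ultimately have "0 \<le> gdeg E w a / w a c" using gdeg_nonneg[of E a w] by (simp add: less_imp_le)
  also have "\<dots> \<le> D_w E w" using gdeg_div_w_le_D_w[OF \<open>D_w_finite E w\<close> \<open>E a c\<close>] .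
  finally show ?thesis .
qed

section \<open>The Li--Yau estimate\<close>

definition penalized_max_point ::
    "('a \<Rightarrow> 'a \<Rightarrow> bool) \<Rightarrow> ('a \<Rightarrow> 'a \<Rightarrow> real) \<Rightarrow> ('a \<Rightarrow> real) \<Rightarrow> ('a \<Rightarrow> real \<Rightarrow> real)
      \<Rightarrow> 'a \<Rightarrow> real \<Rightarrow> real \<Rightarrow> 'a \<Rightarrow> real \<Rightarrow> bool" where
  "penalized_max_point E w mu u x \<epsilon> t xs ts \<longleftrightarrow> ts \<in> {0..t} \<and>
     (\<forall>z. \<forall>r\<in>{0..t}. harnack_quantity E w mu u z r - \<epsilon> * real (gdist E x z)
                   \<le> harnack_quantity E w mu u xs ts - \<epsilon> * real (gdist E x xs))"

lemma penalized_max_conditions: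
  assumes graph: "weighted_graph E w mu" and "\<epsilon> \<ge> 0"
    and pm: "penalized_max_point E w mu u x \<epsilon> t xs ts"
    and pos: "harnack_quantity E w mu u xs ts > 0"
  shows "ts > 0"
    and "\<And>D. ((\<lambda>r. harnack_quantity E w mu u xs r) has_real_derivative D) (at ts within {0..}) \<Longrightarrow> D \<ge> 0"
    and "\<And>y. E xs y \<Longrightarrow> harnack_quantity E w mu u y ts \<le> harnack_quantity E w mu u xs ts + \<epsilon>"
proof -
  have ts: "ts \<in> {0..t}"
    and max: "\<And>z r. r \<in> {0..t} \<Longrightarrow> harnack_quantity E w mu u z r - \<epsilon> * real (gdist E x z)
                      \<le> harnack_quantity E w mu u xs ts - \<epsilon> * real (gdist E x xs)"
    using pm by (auto simp: penalized_max_point_def)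
  have "ts \<noteq> 0" using pos by (auto simp: harnack_quantity_def)
  with ts show "ts > 0" by simp
  show "D \<ge> 0"
    if "((\<lambda>r. harnack_quantity E w mu u xs r) has_real_derivative D) (at ts within {0..})" for D
    using has_real_derivative_nonneg_at_left_max[OF that \<open>ts > 0\<close>] max[of _ xs] ts by auto
  show "harnack_quantity E w mu u y ts \<le> harnack_quantity E w mu u xs ts + \<epsilon>" if "E xs y" for y
  proof -
    have "E\<^sup>*\<^sup>* x xs" using graph by (simp add: weighted_graph_def)
    with that \<open>\<epsilon> \<ge> 0\<close> have "\<epsilon> * real (gdist E x y) \<le> \<epsilon> * (real (gdist E x xs) + 1)"
      by (intro mult_left_mono) (auto dest: gdist_step)
    with max[of ts y] ts show ?thesis by (simp add: algebra_simps)
  qed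
qed

lemma harnack_quadratic_inequality_at_penalized_max:
  assumes graph: "weighted_graph E w mu" and heat: "positive_heat_solution E w mu u"
    and cde: "CDE E w mu n (- K)" and "n > 0" and "K \<ge> 0" and "\<epsilon> \<ge> 0"
    and Dm: "\<And>z. gdeg E w z / mu z \<le> Dm"
    and Dw: "\<And>a b. E a b \<Longrightarrow> gdeg E w a / w a b \<le> Dw" and "Dw \<ge> 0"
    and pm: "penalized_max_point E w mu u x \<epsilon> t xs ts"
    and pos: "harnack_quantity E w mu u xs ts > 0"
  defines "h \<equiv> harnack_quantity E w mu u xs ts"
  shows "2 * h\<^sup>2 / n \<le> h + (2 * t\<^sup>2 * K * (Dm * (Dw + 1) / 2) + t * \<epsilon> * (Dm * (1 + Dw)\<^sup>2))"
proof -
  define f where "f = (\<lambda>y. sqrt (u y ts))"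
  define G where "G = gGamma E w mu f f xs / (f xs)\<^sup>2"
  define S where "S = (1 / mu xs) * (\<Sum>y\<in>{y. E xs y}. w xs y * (f y)\<^sup>2) / (f xs)\<^sup>2"
  note conditions = penalized_max_conditions[OF graph \<open>\<epsilon> \<ge> 0\<close> pm pos]
  have ts: "ts \<in> {0..t}" using pm by (simp add: penalized_max_point_def)
  have mupos: "\<And>z. mu z > 0" and wpos: "\<And>a b. E a b \<Longrightarrow> w a b > 0" and fin: "\<And>z. finite {y. E z y}"
    using graph by (auto simp: weighted_graph_def)
  have fpos: "\<And>z. f z > 0" using heat ts by (simp add: f_def positive_heat_solution_def)
  have h_eq: "h = - ts * glap E w mu f xs / f xs" by (simp add: h_def f_def harnack_quantity_def)
  have lap: "glap E w mu f xs \<le> 0"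
    using pos conditions(1) fpos[of xs] unfolding h_def[symmetric] h_eq
    by (auto simp: zero_less_mult_iff mult_less_0_iff field_simps)
  have cde_f: "gGamma2_tilde E w mu f xs \<ge> (1 / n) * (glap E w mu f xs)\<^sup>2 + (- K) * gGamma E w mu f f xs"
    using cde fpos unfolding CDE_def by blast
  have near_max: "- ts * glap E w mu f y / f y \<le> - ts * glap E w mu f xs / f xs + \<epsilon>" if "E xs y" for y
    using conditions(3)[OF that] by (simp add: f_def harnack_quantity_def)
  have time: "0 \<le> - glap E w mu f xs / f xs
      - ts * (f xs * glap E w mu (sqrt_heat_rate E w mu f) xs
              - glap E w mu f xs * sqrt_heat_rate E w mu f xs) / (f xs)\<^sup>2"
    using conditions(2)[OF harnack_quantity_has_derivative[OF heat, of ts xs]] ts by (simp add: f_def)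
  from harnack_quadratic_inequality_at_max[OF fpos mupos wpos cde_f conditions(1) near_max time]
  have "2 * h\<^sup>2 / n \<le> h + 2 * ts\<^sup>2 * K * G + ts * \<epsilon> * S"
    unfolding h_eq G_def S_def .
  moreover have "ts\<^sup>2 * (K * G) \<le> t\<^sup>2 * (K * (Dm * (Dw + 1) / 2))"
  proof -
    have "G \<le> Dm * (Dw + 1) / 2"
      using gGamma_div_square_le[OF fpos mupos wpos fin lap Dw \<open>Dw \<ge> 0\<close>]
        mult_left_mono[OF Dm[of xs], of "(Dw + 1) / 2"] \<open>Dw \<ge> 0\<close>
      by (simp add: G_def mult.commute)
    moreover have "G \<ge> 0"
      using gGamma_self_nonneg[of mu xs E w f] mupos wpos by (simp add: G_def)
    ultimately show ?thesis
      using ts \<open>K \<ge> 0\<close> by (intro mult_mono power_mono mult_left_mono) auto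
  qed
  moreover have "ts * (\<epsilon> * S) \<le> t * (\<epsilon> * (Dm * (1 + Dw)\<^sup>2))"
  proof -
    have "S \<le> Dm * (1 + Dw)\<^sup>2"
      using neighbour_square_mean_le[OF fpos mupos wpos fin lap Dw \<open>Dw \<ge> 0\<close>]
        mult_left_mono[OF Dm[of xs], of "(1 + Dw)\<^sup>2"]
      by (simp add: S_def mult.commute)
    moreover have "S \<ge> 0"
      using mupos[of xs] wpos unfolding S_def
      by (auto intro!: divide_nonneg_nonneg mult_nonneg_nonneg sum_nonneg simp: less_imp_le)
    ultimately show ?thesis
      using ts \<open>\<epsilon> \<ge> 0\<close> by (intro mult_mono mult_left_mono) auto
  qed
  ultimately show ?thesis unfolding mult.assoc by linarith
qed

lemma harnack_quantity_le_at_penalized_max: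
  assumes graph: "weighted_graph E w mu" and heat: "positive_heat_solution E w mu u"
    and cde: "CDE E w mu n (- K)" and "n > 0" and "K \<ge> 0" and "\<epsilon> \<ge> 0"
    and Dm: "\<And>z. gdeg E w z / mu z \<le> Dm"
    and Dw: "\<And>a b. E a b \<Longrightarrow> gdeg E w a / w a b \<le> Dw" and "Dw \<ge> 0"
    and pm: "penalized_max_point E w mu u x \<epsilon> t xs ts"
  shows "harnack_quantity E w mu u xs ts
    \<le> n / 2 + sqrt (n * (2 * t\<^sup>2 * K * (Dm * (Dw + 1) / 2) + t * \<epsilon> * (Dm * (1 + Dw)\<^sup>2)) / 2)"
    (is "?h \<le> n / 2 + sqrt (n * ?c / 2)")
proof -
  have ts: "ts \<in> {0..t}" using pm by (simp add: penalized_max_point_def)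
  have "Dm \<ge> 0" using gdeg_div_mu_bound_nonneg[OF graph Dm] .
  with ts \<open>K \<ge> 0\<close> \<open>\<epsilon> \<ge> 0\<close> \<open>Dw \<ge> 0\<close> have "?c \<ge> 0"
    by (intro add_nonneg_nonneg mult_nonneg_nonneg) auto
  show ?thesis
  proof (cases "?h > 0")
    case True
    with harnack_quadratic_inequality_at_penalized_max[OF graph heat cde \<open>n > 0\<close> \<open>K \<ge> 0\<close>
        \<open>\<epsilon> \<ge> 0\<close> Dm Dw \<open>Dw \<ge> 0\<close> pm]
    show ?thesis by (intro quadratic_le_bound[OF \<open>n > 0\<close> \<open>?c \<ge> 0\<close>])
  next
    case False
    moreover have "0 \<le> sqrt (n * ?c / 2)" using \<open>n > 0\<close> \<open>?c \<ge> 0\<close> by simp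
    ultimately show ?thesis using \<open>n > 0\<close> by linarith
  qed
qed

lemma harnack_quantity_penalized_bound:
  assumes graph: "weighted_graph E w mu" and heat: "positive_heat_solution E w mu u"
    and cde: "CDE E w mu n (- K)" and "n > 0" and "K \<ge> 0" and "t > 0" and "\<epsilon> > 0"
    and Dm: "\<And>z. gdeg E w z / mu z \<le> Dm"
    and Dw: "\<And>a b. E a b \<Longrightarrow> gdeg E w a / w a b \<le> Dw" and "Dw \<ge> 0"
  shows "harnack_quantity E w mu u x t
    \<le> n / 2 + t * sqrt (n * K * (Dm * (Dw + 1) / 2)) + sqrt (n * t * (Dm * (1 + Dw)\<^sup>2) / 2) * sqrt \<epsilon>"
proof -
  have mupos: "\<And>z. mu z > 0" and wpos: "\<And>a b. E a b \<Longrightarrow> w a b > 0"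
    and fin: "\<And>z. finite {y. E z y}" and conn: "\<And>b. E\<^sup>*\<^sup>* x b"
    using graph by (auto simp: weighted_graph_def)
  have "Dm \<ge> 0" using gdeg_div_mu_bound_nonneg[OF graph Dm] .
  have bdd: "harnack_quantity E w mu u z s \<le> t * Dm" if "s \<in> {0..t}" for z s
  proof -
    have "s * (gdeg E w z / mu z) \<le> t * Dm"
      using that Dm[of z] \<open>Dm \<ge> 0\<close> by (intro mult_mono) (auto simp: gdeg_nonneg wpos mupos less_imp_le)
    with harnack_quantity_le_gdeg[OF graph heat, of s z] that show ?thesis by simp
  qed
  obtain ts xs where ts: "ts \<in> {0..t}"
    and max: "\<And>z r. r \<in> {0..t} \<Longrightarrow> harnack_quantity E w mu u z r - \<epsilon> * real (gdist E x z)
                       \<le> harnack_quantity E w mu u xs ts - \<epsilon> * real (gdist E x xs)"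
    using penalized_sup_attained[where H = "harnack_quantity E w mu u", OF less_imp_le[OF \<open>t > 0\<close>]
        \<open>\<epsilon> > 0\<close> harnack_quantity_continuous_on[OF heat] bdd gdist_sublevel_finite[OF conn fin]]
    by blast
  hence pm: "penalized_max_point E w mu u x \<epsilon> t xs ts"
    using ts by (simp add: penalized_max_point_def)
  have "harnack_quantity E w mu u x t \<le> harnack_quantity E w mu u xs ts - \<epsilon> * real (gdist E x xs)"
    using max[of t x] \<open>t > 0\<close> by simp
  also have "\<dots> \<le> harnack_quantity E w mu u xs ts" using \<open>\<epsilon> > 0\<close> by simp
  also have "\<dots> \<le> n / 2 + sqrt (t\<^sup>2 * (n * K * (Dm * (Dw + 1) / 2)) + n * t * (Dm * (1 + Dw)\<^sup>2) / 2 * \<epsilon>)"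
  proof -
    have arg: "n * (2 * t\<^sup>2 * K * (Dm * (Dw + 1) / 2) + t * \<epsilon> * (Dm * (1 + Dw)\<^sup>2)) / 2
        = t\<^sup>2 * (n * K * (Dm * (Dw + 1) / 2)) + n * t * (Dm * (1 + Dw)\<^sup>2) / 2 * \<epsilon>"
      by (simp add: field_simps)
    from harnack_quantity_le_at_penalized_max[OF graph heat cde \<open>n > 0\<close> \<open>K \<ge> 0\<close>
        less_imp_le[OF \<open>\<epsilon> > 0\<close>] Dm Dw \<open>Dw \<ge> 0\<close> pm]
    show ?thesis unfolding arg .
  qed
  also have "\<dots> \<le> n / 2 + (sqrt (t\<^sup>2 * (n * K * (Dm * (Dw + 1) / 2))) + sqrt (n * t * (Dm * (1 + Dw)\<^sup>2) / 2 * \<epsilon>))"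
    using \<open>n > 0\<close> \<open>K \<ge> 0\<close> \<open>t > 0\<close> \<open>\<epsilon> > 0\<close> \<open>Dm \<ge> 0\<close> \<open>Dw \<ge> 0\<close>
    by (intro add_left_mono sqrt_add_le_add_sqrt mult_nonneg_nonneg divide_nonneg_pos) auto
  also have "\<dots> = n / 2 + t * sqrt (n * K * (Dm * (Dw + 1) / 2)) + sqrt (n * t * (Dm * (1 + Dw)\<^sup>2) / 2) * sqrt \<epsilon>"
    unfolding real_sqrt_mult using \<open>t > 0\<close> by simp
  finally show ?thesis .
qed

lemma li_yau_harnack_bound:
  assumes graph: "weighted_graph E w mu" and heat: "positive_heat_solution E w mu u"
    and cde: "CDE E w mu n (- K)" and "n > 0" and "K \<ge> 0" and "t > 0"
    and Dm: "\<And>z. gdeg E w z / mu z \<le> Dm"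
    and Dw: "\<And>a b. E a b \<Longrightarrow> gdeg E w a / w a b \<le> Dw" and "Dw \<ge> 0"
  shows "harnack_quantity E w mu u x t \<le> n / 2 + t * sqrt (n * K * (Dm * (Dw + 1) / 2))"
proof (rule field_le_epsilon)
  fix e :: real assume "e > 0"
  define c where "c = sqrt (n * t * (Dm * (1 + Dw)\<^sup>2) / 2)"
  define \<epsilon> where "\<epsilon> = (e / (\<bar>c\<bar> + 1))\<^sup>2"
  have "\<epsilon> > 0" using \<open>e > 0\<close> by (simp add: \<epsilon>_def)
  have "c * sqrt \<epsilon> = c * e / (\<bar>c\<bar> + 1)" using \<open>e > 0\<close> by (simp add: \<epsilon>_def)
  also have "\<dots> \<le> e"
    using mult_right_mono[of c "\<bar>c\<bar> + 1" e] \<open>e > 0\<close> by (simp add: pos_divide_le_eq)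
  finally have "c * sqrt \<epsilon> \<le> e" .
  moreover have "harnack_quantity E w mu u x t
      \<le> n / 2 + t * sqrt (n * K * (Dm * (Dw + 1) / 2)) + c * sqrt \<epsilon>"
    unfolding c_def using graph heat cde \<open>n > 0\<close> \<open>K \<ge> 0\<close> \<open>t > 0\<close> \<open>\<epsilon> > 0\<close> Dm Dw \<open>Dw \<ge> 0\<close>
    by (rule harnack_quantity_penalized_bound)
  ultimately show "harnack_quantity E w mu u x t \<le> n / 2 + t * sqrt (n * K * (Dm * (Dw + 1) / 2)) + e"
    by linarith
qed

theorem mainTheorem3:
  fixes E :: "'a \<Rightarrow> 'a \<Rightarrow> bool" and w :: "'a \<Rightarrow> 'a \<Rightarrow> real" and mu :: "'a \<Rightarrow> real"
    and n K :: real and u :: "'a \<Rightarrow> real \<Rightarrow> real"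
  assumes "weighted_graph E w mu"
    and "infinite (UNIV :: 'a set)"
    and "n > 0" and "K > 0"
    and "CDE E w mu n (- K)"
    and "D_mu_finite E w mu" and "D_w_finite E w"
    and "positive_heat_solution E w mu u"
    and "t > 0"
  shows "gGamma E w mu (\<lambda>y. sqrt (u y t)) (\<lambda>y. sqrt (u y t)) x / u x t
           - deriv (\<lambda>s. sqrt (u x s)) t / sqrt (u x t)
         \<le> n / (2 * t) + sqrt (n * K * D_mu E w mu * (D_w E w + 1) / 2)"
proof -
  have "harnack_quantity E w mu u x t \<le> n / 2 + t * sqrt (n * K * (D_mu E w mu * (D_w E w + 1) / 2))"
    using assms gdeg_div_mu_le_D_mu gdeg_div_w_le_D_w D_w_nonneg
    by (intro li_yau_harnack_bound) auto
  hence "- glap E w mu (\<lambda>y. sqrt (u y t)) x / sqrt (u x t)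
      \<le> n / (2 * t) + sqrt (n * K * D_mu E w mu * (D_w E w + 1) / 2)"
    using \<open>t > 0\<close> by (simp add: harnack_quantity_def field_simps)
  then show ?thesis
    unfolding heat_lhs_eq[OF \<open>positive_heat_solution E w mu u\<close> \<open>t > 0\<close>] .
qed
end
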